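(* Let $n\geqslant 2$, $\lambda>0$, let $p_1,\ldots,p_M\in\mathbb{Z}^n$ be distinct points and $n_1,\ldots,n_M$ positive integers. Consider the self-dual Chern–Simons vortex equation $$\Delta u=\lambda e^u(e^u-1)+4\pi\sum_{j=1}^M n_j\delta_{p_j}\quad\text{on }\mathbb{Z}^n,\qquad \lim_{d(x)\to+\infty}u(x)=0. \qquad (\ast)$$ Then $(\ast)$ has a solution $u$ (a topological solution) with $u\in l^p(\mathbb{Z}^n)$ for every $1\leqslant p\leqslant\infty$, which is maximal among all solutions of $(\ast)$, i.e. $f\leqslant u$ pointwise on $\mathbb{Z}^n$ for every solution $f$ of $(\ast)$. Moreover, setting $m=\ln(1+\frac{\lambda}{2n})$, for every $0<\epsilon<1$ one has $u(x)=O(e^{-m(1-\epsilon)d(x)})$ as $d(x)\to+\infty$, i.e. there is a constant $C(\epsilon)$ with $|u(x)|\leqslant C(\epsilon)e^{-m(1-\epsilon)d(x)}$ for all $x$ with $d(x)$ sufficiently large.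
   Context: $\mathbb{Z}^n$ is the integer lattice graph: vertices are the points of $\mathbb{Z}^n$, and $x\sim y$ iff $\sum_{i=1}^n|x_i-y_i|=1$. The distance is $d(x,y)=\sum_{i=1}^n|x_i-y_i|$ and $d(x)=d(x,0)$. The Laplacian of $u:\mathbb{Z}^n\to\mathbb{R}$ is $\Delta u(x)=\sum_{y:\,d(x,y)=1}(u(y)-u(x))$. $\delta_p$ denotes the function on $\mathbb{Z}^n$ equal to $1$ at $p$ and $0$ elsewhere. $l^p(\mathbb{Z}^n)$ is the space of functions with $\sum_x|u(x)|^p<\infty$ ($1\leqslant p<\infty$), resp. $\sup_x|u(x)|<\infty$ ($p=\infty$). A solution $u$ of the equation with $u(x)\to0$ as $d(x)\to\infty$ is called topological. *)

theory Defs
  imports "HOL-Analysis.Analysis"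
begin

text \<open>The lattice Z^n is represented as the type int ^ 'n, with n = CARD('n).\<close>

definition ldist :: "int ^ 'n \<Rightarrow> int ^ 'n \<Rightarrow> int" where
  "ldist x y = (\<Sum>i\<in>UNIV. \<bar>x $ i - y $ i\<bar>)"

definition lnorm :: "int ^ 'n \<Rightarrow> int" where
  "lnorm x = ldist x 0"

definition lap :: "(int ^ 'n \<Rightarrow> real) \<Rightarrow> int ^ 'n \<Rightarrow> real" where
  "lap u x = (\<Sum>y\<in>{y. ldist x y = 1}. u y - u x)"

definition ldelta :: "int ^ 'n \<Rightarrow> int ^ 'n \<Rightarrow> real" where
  "ldelta p x = (if x = p then 1 else 0)"

definition vanish_at_infinity :: "(int ^ 'n \<Rightarrow> real) \<Rightarrow> bool" where
  "vanish_at_infinity u \<longleftrightarrow> (\<forall>e>0. \<exists>R. \<forall>x. lnorm x \<ge> R \<longrightarrow> \<bar>u x\<bar> < e)"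

definition cs_solution ::
  "real \<Rightarrow> nat \<Rightarrow> (nat \<Rightarrow> int ^ 'n) \<Rightarrow> (nat \<Rightarrow> nat) \<Rightarrow> (int ^ 'n \<Rightarrow> real) \<Rightarrow> bool" where
  "cs_solution lam M p nn u \<longleftrightarrow>
     (\<forall>x. lap u x = lam * exp (u x) * (exp (u x) - 1)
                    + 4 * pi * (\<Sum>j\<in>{1..M}. real (nn j) * ldelta (p j) x))
     \<and> vanish_at_infinity u"

definition in_lp :: "real \<Rightarrow> (int ^ 'n \<Rightarrow> real) \<Rightarrow> bool" where
  "in_lp q u = ((\<lambda>x. \<bar>u x\<bar> powr q) summable_on UNIV)"

definition in_linf :: "(int ^ 'n \<Rightarrow> real) \<Rightarrow> bool" where
  "in_linf u = (\<exists>B. \<forall>x. \<bar>u x\<bar> \<le> B)"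

end

theory Submission
  imports Defs
begin

text \<open>
  We use the method of sub- and supersolutions. The function 0 is a supersolution, and a damped
  Jacobi iteration, monotone on nonpositive functions, started at 0 decreases to the maximal
  solution as soon as some subsolution exists. A subsolution vanishing at infinity is the maximum
  of two pieces: a truncated sum of discrete logarithmic potentials \<open>ln (1 + |x - p\<^sub>j|\<^sup>2)\<close>, which
  for \<open>n \<ge> 2\<close> are subharmonic with Laplacian \<open>2 n ln 2\<close> at \<open>p\<^sub>j\<close> and so absorb the Dirac masses,
  and an exponential barrier \<open>-A (1 + t)^(-d(x))\<close> that is a subsolution away from the vortices.
  By the maximum principle every solution is nonpositive, hence a subsolution, hence below the
  maximal one. Comparing the maximal solution with the barrier for \<open>t = \<lambda>/(2n)\<close> gives
  \<open>|u(x)| \<le> A (1 + \<lambda>/(2n))^(-d(x))\<close>, from which the \<open>l\<^sup>p\<close> bounds and the decay rate follow.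
\<close>

section \<open>The lattice Laplacian\<close>

lemma axis_component: "axis i c $ j = (if j = i then c else 0)"
  by (simp add: axis_def)

lemma ldist_eq_1_iff:
  fixes x y :: "int ^ 'n"
  shows "ldist x y = 1 \<longleftrightarrow> (\<exists>i. y = x + axis i 1 \<or> y = x - axis i 1)"
proof
  assume h: "ldist x y = 1"
  define d where "d = x - y"
  have hs: "(\<Sum>j\<in>UNIV. \<bar>d $ j\<bar>) = 1" using h by (simp add: ldist_def d_def)
  then obtain i where di: "d $ i \<noteq> 0" by (metis sum.neutral abs_zero zero_neq_one)
  have split: "(\<Sum>j\<in>UNIV. \<bar>d $ j\<bar>) = \<bar>d $ i\<bar> + (\<Sum>j\<in>UNIV - {i}. \<bar>d $ j\<bar>)"
    by (simp add: sum.remove)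
  have "(\<Sum>j\<in>UNIV - {i}. \<bar>d $ j\<bar>) \<ge> 0" by (simp add: sum_nonneg)
  then have ai: "\<bar>d $ i\<bar> = 1" and rest: "(\<Sum>j\<in>UNIV - {i}. \<bar>d $ j\<bar>) = 0"
    using hs split di by linarith+
  have others: "d $ j = 0" if "j \<noteq> i" for j
    using rest that by (subst (asm) sum_nonneg_eq_0_iff) auto
  from ai have "y = x - axis i (d $ i)"
    using others unfolding d_def by (auto simp: vec_eq_iff axis_component)
  moreover have "axis i (- 1) = - axis i (1::int)"
    by (simp add: vec_eq_iff axis_component)
  ultimately show "\<exists>i. y = x + axis i 1 \<or> y = x - axis i 1"
    using ai by (cases "d $ i = 1") (auto simp: abs_if split: if_splits)
next
  assume "\<exists>i. y = x + axis i 1 \<or> y = x - axis i 1"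
  then show "ldist x y = 1"
    by (auto simp: ldist_def axis_component if_distrib cong: if_cong)
qed

lemma lap_axis:
  fixes u :: "int ^ 'n \<Rightarrow> real"
  shows "lap u x = (\<Sum>i\<in>UNIV. u (x + axis i 1) + u (x - axis i 1) - 2 * u x)"
proof -
  have nbrs: "{y. ldist x y = 1} = range (\<lambda>i. x + axis i 1) \<union> range (\<lambda>i. x - axis i 1)"
    using ldist_eq_1_iff[of x] by blast
  have disj: "range (\<lambda>i. x + axis i 1) \<inter> range (\<lambda>i. x - axis i (1::int)) = {}"
    by (auto simp: vec_eq_iff axis_component split: if_splits)
  have inj_plus: "inj (\<lambda>i. x + axis i (1::int))" and inj_minus: "inj (\<lambda>i. x - axis i (1::int))"
    by (auto intro!: injI simp: vec_eq_iff axis_component split: if_splits)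
  have "lap u x = (\<Sum>i\<in>UNIV. u (x + axis i 1) - u x) + (\<Sum>i\<in>UNIV. u (x - axis i 1) - u x)"
    unfolding lap_def nbrs by (simp add: sum.union_disjoint disj sum.reindex inj_plus inj_minus)
  then show ?thesis by (simp add: sum.distrib[symmetric] algebra_simps)
qed

lemma lap_affine: "lap (\<lambda>y. c * f y + d) x = c * lap f x"
  unfolding lap_def by (simp add: sum_distrib_left algebra_simps)

lemma lap_sum: "lap (\<lambda>y. \<Sum>j\<in>J. f j y) x = (\<Sum>j\<in>J. lap (f j) x)"
  unfolding lap_def by (simp add: sum_subtractf[symmetric] sum.swap[of _ J])

lemma lap_max_ge:
  assumes "g x \<le> f x"
  shows "lap f x \<le> lap (\<lambda>y. max (f y) (g y)) x"
  unfolding lap_def using assms by (intro sum_mono) auto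

lemma lnorm_eq: "lnorm x = (\<Sum>i\<in>UNIV. \<bar>x $ i\<bar>)"
  by (simp add: lnorm_def ldist_def)

lemma lnorm_nonneg: "0 \<le> lnorm x"
  by (simp add: lnorm_eq sum_nonneg)

lemma abs_component_le_lnorm: "\<bar>x $ i\<bar> \<le> lnorm x"
  unfolding lnorm_eq by (rule member_le_sum) auto

lemma lnorm_add_axis: "lnorm (x + axis i c) = lnorm x + \<bar>x $ i + c\<bar> - \<bar>x $ i\<bar>"
proof -
  have "(\<Sum>j\<in>UNIV. \<bar>(x + axis i c) $ j\<bar>)
      = (\<Sum>j\<in>UNIV. \<bar>x $ j\<bar> + (if j = i then \<bar>x $ i + c\<bar> - \<bar>x $ i\<bar> else 0))"
    by (intro sum.cong) (auto simp: axis_component)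
  then show ?thesis unfolding lnorm_eq by (simp add: sum.distrib)
qed

lemma lnorm_diff_axis: "lnorm (x - axis i c) = lnorm x + \<bar>x $ i - c\<bar> - \<bar>x $ i\<bar>"
proof -
  have minus: "x - axis i c = x + axis i (- c)" by (simp add: vec_eq_iff axis_component)
  show ?thesis unfolding minus lnorm_add_axis by simp
qed

lemma ldist_nonneg: "0 \<le> ldist x y"
  unfolding ldist_def by (simp add: sum_nonneg)

lemma ldist_eq_0_iff: "ldist x y = 0 \<longleftrightarrow> x = y"
  unfolding ldist_def by (auto simp: sum_nonneg_eq_0_iff vec_eq_iff)

lemma ldist_sym: "ldist x y = ldist y x"
  unfolding ldist_def by (simp add: abs_minus_commute)

lemma ldist_triangle: "ldist x z \<le> ldist x y + ldist y z"
  unfolding ldist_def by (simp add: sum.distrib[symmetric]) (rule sum_mono, simp)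

lemma finite_box: "finite {x :: int ^ 'n. \<forall>i. \<bar>x $ i\<bar> \<le> N}"
proof -
  let ?B = "{x :: int ^ 'n. \<forall>i. \<bar>x $ i\<bar> \<le> N}"
  have "vec_nth ` ?B \<subseteq> PiE UNIV (\<lambda>_. {-N..N})"
    by (auto simp: PiE_def extensional_def abs_le_iff) (metis minus_le_iff)
  then have "finite (vec_nth ` ?B)"
    by (rule finite_subset) (simp add: finite_PiE)
  moreover have "inj_on vec_nth ?B" by (auto simp: inj_on_def vec_eq_iff)
  ultimately show ?thesis using finite_imageD by blast
qed

lemma finite_lnorm_less: "finite {x :: int ^ 'n. lnorm x < R}"
  by (rule finite_subset[OF _ finite_box[of R]]) (auto intro: order_trans[OF abs_component_le_lnorm])

lemma vanish_at_infinity_finite_superlevel: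
  assumes "vanish_at_infinity u" and "e > 0"
  shows "finite {x :: int ^ 'n. e \<le> \<bar>u x\<bar>}"
proof -
  obtain R where "\<And>x. lnorm x \<ge> R \<Longrightarrow> \<bar>u x\<bar> < e"
    using assms unfolding vanish_at_infinity_def by blast
  then have "{x. e \<le> \<bar>u x\<bar>} \<subseteq> {x. lnorm x < R}" by (auto simp: not_le[symmetric])
  then show ?thesis using finite_lnorm_less finite_subset by blast
qed

lemma vanish_at_infinity_dominated:
  assumes "vanish_at_infinity w" and "\<And>x. \<bar>u x\<bar> \<le> \<bar>w x\<bar>"
  shows "vanish_at_infinity u"
  using assms unfolding vanish_at_infinity_def by (meson order_le_less_trans)

section \<open>Sub- and supersolutions\<close>

definition cs_nonlin :: "real \<Rightarrow> real \<Rightarrow> real" where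
  "cs_nonlin lam v = lam * exp v * (exp v - 1)"

definition vortex_source :: "nat \<Rightarrow> (nat \<Rightarrow> int ^ 'n) \<Rightarrow> (nat \<Rightarrow> nat) \<Rightarrow> int ^ 'n \<Rightarrow> real" where
  "vortex_source M p nn x = 4 * pi * (\<Sum>j\<in>{1..M}. real (nn j) * ldelta (p j) x)"

lemma cs_solution_iff:
  "cs_solution lam M p nn u \<longleftrightarrow>
     (\<forall>x. lap u x = cs_nonlin lam (u x) + vortex_source M p nn x) \<and> vanish_at_infinity u"
  by (simp add: cs_solution_def cs_nonlin_def vortex_source_def)

lemma vortex_source_nonneg: "0 \<le> vortex_source M p nn x"
  unfolding vortex_source_def ldelta_def by (intro mult_nonneg_nonneg sum_nonneg) auto

lemma vortex_source_eq_0: "(\<And>j. j \<in> {1..M} \<Longrightarrow> x \<noteq> p j) \<Longrightarrow> vortex_source M p nn x = 0"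
  unfolding vortex_source_def ldelta_def by auto

lemma cs_nonlin_nonpos: "0 \<le> lam \<Longrightarrow> v \<le> 0 \<Longrightarrow> cs_nonlin lam v \<le> 0"
  unfolding cs_nonlin_def by (simp add: mult_nonneg_nonpos)

lemma cs_nonlin_pos: "0 < lam \<Longrightarrow> 0 < v \<Longrightarrow> 0 < cs_nonlin lam v"
  unfolding cs_nonlin_def by simp

lemma cs_nonlin_lipschitz:
  assumes "0 \<le> lam" "u \<le> v" "v \<le> 0"
  shows "cs_nonlin lam v - cs_nonlin lam u \<le> lam * (v - u)"
proof -
  have "exp u \<le> exp v" "exp v \<le> 1" "exp u \<le> 1" using assms by simp_all
  have "exp v - exp u \<le> v - u"
  proof -
    have "exp v * (1 + (u - v)) \<le> exp v * exp (u - v)"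
      using exp_ge_add_one_self[of "u - v"] by simp
    then have "exp v + exp v * (u - v) \<le> exp u" by (simp add: exp_diff algebra_simps)
    moreover have "exp v * (v - u) \<le> v - u"
      using \<open>exp v \<le> 1\<close> assms by (simp add: mult_left_le_one_le)
    ultimately show ?thesis by (simp add: algebra_simps)
  qed
  have "cs_nonlin lam v - cs_nonlin lam u = lam * ((exp v - exp u) * (exp v + exp u - 1))"
    unfolding cs_nonlin_def by (simp add: algebra_simps)
  also have "\<dots> \<le> lam * (exp v - exp u)"
  proof -
    have "(exp v - exp u) * (exp v + exp u - 1) \<le> exp v - exp u"
      using \<open>exp u \<le> exp v\<close> \<open>exp v \<le> 1\<close> \<open>exp u \<le> 1\<close> by (intro mult_left_le) linarith+
    then show ?thesis using assms(1) by (rule mult_left_mono)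
  qed
  also have "\<dots> \<le> lam * (v - u)"
    using \<open>exp v - exp u \<le> v - u\<close> assms(1) by (rule mult_left_mono)
  finally show ?thesis .
qed

lemma cs_nonlin_le_linear:
  assumes "0 \<le> lam" "v \<le> 0"
  shows "cs_nonlin lam v \<le> lam * v * exp (2 * v)"
proof -
  have "exp v * (1 - v) \<le> exp v * exp (- v)"
    using exp_ge_add_one_self[of "- v"] by simp
  then have "exp v - 1 \<le> v * exp v" by (simp add: exp_minus algebra_simps)
  then have "lam * exp v * (exp v - 1) \<le> lam * exp v * (v * exp v)"
    using assms by (intro mult_left_mono) auto
  then show ?thesis unfolding cs_nonlin_def by (simp add: exp_add[symmetric] mult_2 algebra_simps)
qed

definition cs_subsolution :: "real \<Rightarrow> (int ^ 'n \<Rightarrow> real) \<Rightarrow> (int ^ 'n \<Rightarrow> real) \<Rightarrow> bool" where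
  "cs_subsolution lam s w \<longleftrightarrow> (\<forall>x. w x \<le> 0) \<and> (\<forall>x. cs_nonlin lam (w x) + s x \<le> lap w x)"

lemma cs_subsolution_max:
  assumes "cs_subsolution lam s w" and "\<And>x. v x \<le> 0"
    and "\<And>x. w x < v x \<Longrightarrow> cs_nonlin lam (v x) + s x \<le> lap v x"
  shows "cs_subsolution lam s (\<lambda>x. max (w x) (v x))"
  unfolding cs_subsolution_def
proof (intro conjI allI)
  fix x
  show "max (w x) (v x) \<le> 0" using assms(1,2) unfolding cs_subsolution_def by simp
  show "cs_nonlin lam (max (w x) (v x)) + s x \<le> lap (\<lambda>x. max (w x) (v x)) x"
  proof (cases "v x \<le> w x")
    case True
    then have "cs_nonlin lam (max (w x) (v x)) + s x = cs_nonlin lam (w x) + s x"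
      by (simp add: max_absorb1)
    also have "\<dots> \<le> lap w x" using assms(1) unfolding cs_subsolution_def by blast
    also have "\<dots> \<le> lap (\<lambda>x. max (w x) (v x)) x" using True by (rule lap_max_ge)
    finally show ?thesis .
  next
    case False
    have "lap v x \<le> lap (\<lambda>x. max (w x) (v x)) x"
      using lap_max_ge[of w x v] False by (simp add: max.commute)
    then show ?thesis using assms(3)[of x] False by simp
  qed
qed

text \<open>Adding \<open>\<lambda> v\<close> to both sides makes the right-hand side of the equation nondecreasing in
  \<open>v \<le> 0\<close> (by \<open>cs_nonlin_lipschitz\<close>); solving the resulting identity at \<open>x\<close> for \<open>v x\<close> gives this
  damped Jacobi step.\<close>
definition cs_step :: "real \<Rightarrow> (int ^ 'n \<Rightarrow> real) \<Rightarrow> (int ^ 'n \<Rightarrow> real) \<Rightarrow> int ^ 'n \<Rightarrow> real" where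
  "cs_step lam s v x =
     ((\<Sum>i\<in>UNIV. v (x + axis i 1) + v (x - axis i 1)) + lam * v x - cs_nonlin lam (v x) - s x)
       / (2 * real CARD('n) + lam)"

lemma two_card_add_pos: "0 \<le> c \<Longrightarrow> 0 < 2 * real CARD('n::finite) + c"
  by (metis add_pos_nonneg mult_pos_pos of_nat_0_less_iff zero_less_card_finite zero_less_numeral)

lemma cs_step_eq:
  fixes x :: "int ^ 'n"
  assumes "0 \<le> lam"
  shows "cs_step lam s v x = v x + (lap v x - cs_nonlin lam (v x) - s x) / (2 * real CARD('n) + lam)"
proof -
  have "0 < 2 * real CARD('n) + lam" by (rule two_card_add_pos[OF assms])
  then show ?thesis
    unfolding cs_step_def lap_axis by (simp add: field_simps sum.distrib sum_subtractf)
qed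

lemma cs_step_mono:
  assumes "0 \<le> lam" and "\<And>y. v y \<le> w y" and "\<And>y. w y \<le> 0"
  shows "cs_step lam s v x \<le> cs_step lam s w x"
proof -
  have "(\<Sum>i\<in>UNIV. v (x + axis i 1) + v (x - axis i 1)) \<le> (\<Sum>i\<in>UNIV. w (x + axis i 1) + w (x - axis i 1))"
    by (intro sum_mono add_mono assms(2))
  moreover have "cs_nonlin lam (w x) - cs_nonlin lam (v x) \<le> lam * (w x - v x)"
    using assms by (intro cs_nonlin_lipschitz)
  ultimately show ?thesis
    unfolding cs_step_def using assms(1)
    by (intro divide_right_mono) (auto simp: algebra_simps)
qed

lemma cs_subsolution_le_step:
  fixes x :: "int ^ 'n"
  assumes "0 \<le> lam" and "cs_subsolution lam s w"
  shows "w x \<le> cs_step lam s w x"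
proof -
  have "0 \<le> lap w x - cs_nonlin lam (w x) - s x"
    using assms(2) unfolding cs_subsolution_def by (simp add: algebra_simps)
  then show ?thesis
    using two_card_add_pos[OF assms(1), where 'n='n] by (simp add: cs_step_eq[OF assms(1)])
qed

lemma cs_step_fixpoint:
  fixes x :: "int ^ 'n"
  assumes "0 \<le> lam" and "cs_step lam s v x = v x"
  shows "lap v x = cs_nonlin lam (v x) + s x"
  using assms two_card_add_pos[OF assms(1), where 'n='n]
  unfolding cs_step_eq[OF assms(1)] by simp

lemma cs_step_iterates_decreasing:
  assumes "0 \<le> lam" and "\<And>x. 0 \<le> s x"
  shows "(\<forall>x. (cs_step lam s ^^ Suc k) (\<lambda>_. 0) x \<le> (cs_step lam s ^^ k) (\<lambda>_. 0) x)
    \<and> (\<forall>x. (cs_step lam s ^^ k) (\<lambda>_. 0) x \<le> 0)"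
proof (induction k)
  case 0
  have "cs_step lam s (\<lambda>_. 0) x \<le> 0" for x
    unfolding cs_step_def cs_nonlin_def using assms by (simp add: divide_nonpos_pos)
  then show ?case by simp
next
  case (Suc k)
  let ?I = "\<lambda>k. (cs_step lam s ^^ k) (\<lambda>_. 0)"
  have "cs_step lam s (?I (Suc k)) x \<le> cs_step lam s (?I k) x" for x
    using Suc.IH by (intro cs_step_mono[OF assms(1)]) auto
  then show ?case using Suc.IH by (auto intro: order_trans)
qed

lemma cs_subsolution_le_step_iterates:
  assumes "0 \<le> lam" and "\<And>x. 0 \<le> s x" and "cs_subsolution lam s w"
  shows "w x \<le> (cs_step lam s ^^ k) (\<lambda>_. 0) x"
proof (induction k arbitrary: x)
  case 0
  then show ?case using assms(3) unfolding cs_subsolution_def by simp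
next
  case (Suc k)
  have "w x \<le> cs_step lam s w x" by (rule cs_subsolution_le_step[OF assms(1,3)])
  also have "\<dots> \<le> cs_step lam s ((cs_step lam s ^^ k) (\<lambda>_. 0)) x"
    using Suc.IH cs_step_iterates_decreasing[where s=s, OF assms(1,2)] by (intro cs_step_mono[OF assms(1)]) auto
  finally show ?case by simp
qed

lemma cs_step_tendsto:
  fixes x :: "int ^ 'n"
  assumes "0 \<le> lam" and "\<And>y. (\<lambda>k. V k y) \<longlonglongrightarrow> U y"
  shows "(\<lambda>k. cs_step lam s (V k) x) \<longlonglongrightarrow> cs_step lam s U x"
  unfolding cs_step_def cs_nonlin_def
  using two_card_add_pos[OF assms(1), where 'n='n]
  by (intro tendsto_intros assms(2)) simp

text \<open>Monotone iteration from the supersolution 0: the iterates decrease and stay above every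
  subsolution, so (given one subsolution) they converge to the maximal solution.\<close>
lemma maximal_cs_solution_exists:
  assumes "0 \<le> lam" and "\<And>x. 0 \<le> s x" and "cs_subsolution lam s w"
  obtains U where "\<And>x. lap U x = cs_nonlin lam (U x) + s x" and "\<And>x. U x \<le> 0"
    and "\<And>w' x. cs_subsolution lam s w' \<Longrightarrow> w' x \<le> U x"
proof -
  let ?I = "\<lambda>k. (cs_step lam s ^^ k) (\<lambda>_. 0)"
  note decr = cs_step_iterates_decreasing[where s=s, OF assms(1,2)]
  have "convergent (\<lambda>k. ?I k x)" for x
  proof -
    have "decseq (\<lambda>k. ?I k x)" by (rule decseq_SucI) (use decr in blast)
    moreover have "\<forall>k. w x \<le> ?I k x" using cs_subsolution_le_step_iterates[OF assms] by blast
    ultimately show ?thesis by (rule decseq_convergent) (auto simp: convergent_def)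
  qed
  then have lim: "(\<lambda>k. ?I k x) \<longlonglongrightarrow> lim (\<lambda>k. ?I k x)" for x
    using convergent_LIMSEQ_iff by blast
  define U where "U x = lim (\<lambda>k. ?I k x)" for x
  have "cs_step lam s U x = U x" for x
  proof (rule LIMSEQ_unique)
    show "(\<lambda>k. ?I (Suc k) x) \<longlonglongrightarrow> U x" unfolding U_def using lim by (rule LIMSEQ_Suc)
    have "(\<lambda>k. cs_step lam s (?I k) x) \<longlonglongrightarrow> cs_step lam s U x"
      using lim unfolding U_def by (intro cs_step_tendsto[OF assms(1)])
    then show "(\<lambda>k. ?I (Suc k) x) \<longlonglongrightarrow> cs_step lam s U x" by simp
  qed
  then have "lap U x = cs_nonlin lam (U x) + s x" for x by (rule cs_step_fixpoint[OF assms(1)])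
  moreover have "U x \<le> 0" for x
    unfolding U_def by (rule LIMSEQ_le_const2[OF lim]) (use decr in blast)
  moreover have "w' x \<le> U x" if "cs_subsolution lam s w'" for w' x
    unfolding U_def
    by (rule LIMSEQ_le_const[OF lim]) (use cs_subsolution_le_step_iterates[OF assms(1,2) that] in blast)
  ultimately show ?thesis using that by blast
qed

text \<open>Maximum principle: a positive value of a solution vanishing at infinity would be attained
  at a maximum point, where the Laplacian is nonpositive but the equation makes it positive.\<close>
lemma cs_solution_nonpos:
  fixes f :: "int ^ 'n \<Rightarrow> real"
  assumes "0 < lam" and "\<And>x. 0 \<le> s x"
    and eq: "\<And>x. lap f x = cs_nonlin lam (f x) + s x" and "vanish_at_infinity f"
  shows "f x \<le> 0"
proof (rule ccontr)
  assume "\<not> f x \<le> 0"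
  let ?P = "{y. f x \<le> \<bar>f y\<bar>}"
  have fin: "finite ?P" using \<open>\<not> f x \<le> 0\<close>
    by (intro vanish_at_infinity_finite_superlevel[OF assms(4)]) simp
  have "Max (f ` ?P) \<in> f ` ?P" using fin by (intro Max_in) (auto intro!: exI[of _ x])
  then obtain z where "z \<in> ?P" and "f z = Max (f ` ?P)" by (metis imageE)
  then have "f y \<le> f z" if "y \<in> ?P" for y
    using fin that by (metis Max_ge finite_imageI imageI)
  then have zmax: "f y \<le> f z" for y
    by (cases "y \<in> ?P") (auto intro: order_trans[of _ "f x"])
  then have "lap f z \<le> 0" unfolding lap_def by (intro sum_nonpos) simp
  moreover have "0 < cs_nonlin lam (f z)"
    using zmax[of x] \<open>\<not> f x \<le> 0\<close> assms(1) by (intro cs_nonlin_pos) auto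
  ultimately show False using eq[of z] assms(2)[of z] by simp
qed

lemma cs_solution_is_subsolution:
  assumes "0 < lam" and "cs_solution lam M p nn f"
  shows "cs_subsolution lam (vortex_source M p nn) f"
proof -
  have "f x \<le> 0" for x
    using assms(2) unfolding cs_solution_iff
    by (intro cs_solution_nonpos[where s="vortex_source M p nn", OF assms(1) vortex_source_nonneg]) auto
  then show ?thesis using assms(2) unfolding cs_subsolution_def cs_solution_iff by simp
qed

section \<open>Exponential barriers\<close>

lemma lap_radial_ge:
  fixes g :: "int \<Rightarrow> real" and x :: "int ^ 'n"
  assumes mono: "mono g"
  shows "real CARD('n) * (g (lnorm x + 1) + g (lnorm x - 1) - 2 * g (lnorm x))
    \<le> lap (\<lambda>y. g (lnorm y)) x"
proof -
  let ?r = "lnorm x"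
  have "g (?r + 1) + g (?r - 1) - 2 * g ?r
      \<le> g (lnorm (x + axis i 1)) + g (lnorm (x - axis i 1)) - 2 * g ?r" for i
  proof -
    consider "x $ i > 0" | "x $ i < 0" | "x $ i = 0" by linarith
    then show ?thesis
    proof cases
      case 3
      have "g (?r - 1) \<le> g (?r + 1)" using mono by (simp add: monoD)
      then show ?thesis using 3 by (simp add: lnorm_add_axis lnorm_diff_axis)
    qed (simp_all add: lnorm_add_axis lnorm_diff_axis)
  qed
  then have "(\<Sum>i\<in>(UNIV::'n set). g (?r + 1) + g (?r - 1) - 2 * g ?r) \<le> lap (\<lambda>y. g (lnorm y)) x"
    unfolding lap_axis by (intro sum_mono)
  then show ?thesis by simp
qed

definition exp_barrier :: "real \<Rightarrow> real \<Rightarrow> int \<Rightarrow> int ^ 'n \<Rightarrow> real" where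
  "exp_barrier A t R x = - A * (1 / (1 + t)) ^ nat (lnorm x - R)"

lemma exp_barrier_nonpos: "0 \<le> A \<Longrightarrow> 0 < t \<Longrightarrow> exp_barrier A t R x \<le> 0"
  unfolding exp_barrier_def by simp

lemma exp_barrier_ge: "0 \<le> A \<Longrightarrow> 0 < t \<Longrightarrow> - A \<le> exp_barrier A t R x"
  unfolding exp_barrier_def by (simp add: mult_left_le power_le_one)

lemma exp_barrier_inner: "lnorm x \<le> R \<Longrightarrow> exp_barrier A t R x = - A"
  unfolding exp_barrier_def by simp

lemma lap_exp_barrier_ge:
  fixes x :: "int ^ 'n"
  assumes "0 \<le> A" and "0 < t"
  shows "real CARD('n) * (t\<^sup>2 / (1 + t)) * exp_barrier A t R x \<le> lap (exp_barrier A t R) x"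
proof -
  define a where "a = 1 / (1 + t)"
  have a: "0 < a" "a \<le> 1" using assms(2) by (auto simp: a_def)
  define g where "g s = - A * a ^ nat (s - R)" for s
  have barrier: "exp_barrier A t R = (\<lambda>y. g (lnorm y))"
    by (auto simp: exp_barrier_def g_def a_def)
  have "mono g"
    unfolding g_def using a assms(1) by (intro monoI mult_left_mono_neg power_decreasing) auto
  then have lap_ge: "real CARD('n) * (g (lnorm x + 1) + g (lnorm x - 1) - 2 * g (lnorm x))
      \<le> lap (exp_barrier A t R) x"
    unfolding barrier by (rule lap_radial_ge)
  let ?r = "lnorm x"
  show ?thesis
  proof (cases "?r \<le> R")
    case True
    have "g ?r \<le> g (?r + 1)" using \<open>mono g\<close> by (simp add: monoD)
    moreover have "g (?r - 1) = g ?r" using True by (simp add: g_def)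
    ultimately have "0 \<le> real CARD('n) * (g (?r + 1) + g (?r - 1) - 2 * g ?r)" by simp
    moreover have "real CARD('n) * (t\<^sup>2 / (1 + t)) * exp_barrier A t R x \<le> 0"
      using assms exp_barrier_nonpos[OF assms] by (intro mult_nonneg_nonpos) auto
    ultimately show ?thesis using lap_ge by linarith
  next
    case False
    define k where "k = nat (?r - R - 1)"
    have "nat (?r - R) = Suc k" "nat (?r + 1 - R) = Suc (Suc k)" "nat (?r - 1 - R) = k"
      using False unfolding k_def by arith+
    then have "g (?r + 1) = a * g ?r" "g (?r - 1) = (1 + t) * g ?r"
      using assms(2) by (simp_all add: g_def a_def)
    then have "g (?r + 1) + g (?r - 1) - 2 * g ?r = (t\<^sup>2 / (1 + t)) * g ?r"
      using assms(2) by (simp add: a_def field_simps power2_eq_square)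
    then show ?thesis using lap_ge by (simp add: barrier)
  qed
qed

lemma exp_barrier_subsolution_at:
  fixes x :: "int ^ 'n"
  assumes "0 \<le> lam" and "0 \<le> A" and "0 < t"
    and "real CARD('n) * t\<^sup>2 \<le> lam * exp (2 * exp_barrier A t R x) * (1 + t)"
  shows "cs_nonlin lam (exp_barrier A t R x) \<le> lap (exp_barrier A t R) x"
proof -
  let ?v = "exp_barrier A t R x"
  have v: "?v \<le> 0" using assms(2,3) by (rule exp_barrier_nonpos)
  have "real CARD('n) * (t\<^sup>2 / (1 + t)) \<le> lam * exp (2 * ?v)"
    using assms(3,4) by (simp add: field_simps)
  then have "?v * (lam * exp (2 * ?v)) \<le> ?v * (real CARD('n) * (t\<^sup>2 / (1 + t)))"
    using v by (rule mult_left_mono_neg)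
  then show ?thesis
    using cs_nonlin_le_linear[OF assms(1) v] lap_exp_barrier_ge[OF assms(2,3), of R x]
    by (simp add: algebra_simps)
qed

lemma exp_barrier_subsolution_small_rate:
  fixes x :: "int ^ 'n"
  assumes "0 \<le> lam" "0 \<le> A" "0 < t" "t \<le> 1" and "real CARD('n) * t \<le> lam * exp (- 2 * A)"
  shows "cs_nonlin lam (exp_barrier A t R x) \<le> lap (exp_barrier A t R) x"
proof (rule exp_barrier_subsolution_at[OF assms(1-3)])
  have "t\<^sup>2 \<le> t" unfolding power2_eq_square using assms(3,4) by (intro mult_left_le) auto
  then have "real CARD('n) * t\<^sup>2 \<le> lam * exp (- 2 * A)"
    using assms(5) by (meson mult_left_mono of_nat_0_le_iff order_trans)
  also have "\<dots> \<le> lam * exp (2 * exp_barrier A t R x)"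
    using exp_barrier_ge[OF assms(2,3), of R x] assms(1) by (simp add: mult_left_mono)
  also have "\<dots> \<le> lam * exp (2 * exp_barrier A t R x) * (1 + t)"
    using mult_left_mono[of 1 "1 + t" "lam * exp (2 * exp_barrier A t R x)"] assms(1,3) by simp
  finally show "real CARD('n) * t\<^sup>2 \<le> lam * exp (2 * exp_barrier A t R x) * (1 + t)" .
qed

text \<open>Where the barrier is close to 0 the nonlinearity is close to its linearisation \<open>\<lambda> v\<close>, which
  allows the rate \<open>t = \<lambda>/(2n)\<close>; this is the source of the decay rate \<open>ln (1 + \<lambda>/(2n))\<close>.\<close>
lemma exp_barrier_subsolution_near_zero:
  fixes x :: "int ^ 'n" and lam :: real
  defines "t \<equiv> lam / (2 * real CARD('n))"
  assumes "0 < lam" "0 \<le> A" and "- 1/4 \<le> exp_barrier A t R x"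
  shows "cs_nonlin lam (exp_barrier A t R x) \<le> lap (exp_barrier A t R) x"
proof (rule exp_barrier_subsolution_at)
  have "1/2 \<le> exp (- 1/2 :: real)" using exp_ge_add_one_self[of "- 1/2"] by simp
  also have "\<dots> \<le> exp (2 * exp_barrier A t R x)" using assms(4) by simp
  finally have "1/2 \<le> exp (2 * exp_barrier A t R x)" .
  have "real CARD('n) * t\<^sup>2 = lam / 2 * t" by (simp add: t_def power2_eq_square)
  also have "\<dots> \<le> lam / 2 * (1 + t)" using assms(2) by simp
  also have "\<dots> \<le> lam * exp (2 * exp_barrier A t R x) * (1 + t)"
    using \<open>1/2 \<le> exp (2 * exp_barrier A t R x)\<close> assms(2) by (intro mult_right_mono) (auto simp: t_def)
  finally show "real CARD('n) * t\<^sup>2 \<le> lam * exp (2 * exp_barrier A t R x) * (1 + t)" .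
qed (use assms in \<open>auto simp: t_def\<close>)

lemma exp_barrier_vanish_at_infinity:
  assumes "0 \<le> A" and "0 < t"
  shows "vanish_at_infinity (exp_barrier A t R)"
  unfolding vanish_at_infinity_def
proof (intro allI impI)
  fix e :: real assume "e > 0"
  define a where "a = 1 / (1 + t)"
  have a: "0 < a" "a < 1" using assms(2) by (auto simp: a_def)
  obtain k where k: "a ^ k < e / (A + 1)"
    using real_arch_pow_inv[of "e / (A + 1)" a] \<open>e > 0\<close> assms(1) a by auto
  have "\<bar>exp_barrier A t R x\<bar> < e" if "R + int k \<le> lnorm x" for x
  proof -
    have "a ^ nat (lnorm x - R) \<le> a ^ k" using that a by (intro power_decreasing) auto
    then have "A * a ^ nat (lnorm x - R) \<le> (A + 1) * a ^ k"
      using assms(1) a by (intro mult_mono) auto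
    also have "\<dots> < e" using k assms(1) by (simp add: field_simps)
    finally show ?thesis using assms by (simp add: exp_barrier_def a_def)
  qed
  then show "\<exists>R'. \<forall>x. R' \<le> lnorm x \<longrightarrow> \<bar>exp_barrier A t R x\<bar> < e" by blast
qed

section \<open>Discrete logarithmic potentials\<close>

lemma Weierstrass_prod_ineq_scaled:
  fixes a :: "'i \<Rightarrow> real"
  assumes "0 < A" and "\<And>i. i \<in> I \<Longrightarrow> 0 \<le> a i \<and> a i \<le> A"
  shows "A ^ card I * (1 - sum a I / A) \<le> (\<Prod>i\<in>I. A - a i)"
proof -
  have "1 - (\<Sum>i\<in>I. a i / A) \<le> (\<Prod>i\<in>I. 1 - a i / A)"
    using assms by (intro Weierstrass_prod_ineq) simp
  then have "A ^ card I * (1 - sum a I / A) \<le> A ^ card I * (\<Prod>i\<in>I. 1 - a i / A)"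
    using assms(1) by (simp add: sum_divide_distrib)
  also have "\<dots> = (\<Prod>i\<in>I. A * (1 - a i / A))" by (simp add: prod.distrib)
  also have "\<dots> = (\<Prod>i\<in>I. A - a i)" using assms(1) by (simp add: right_diff_distrib)
  finally show ?thesis .
qed

text \<open>The inequality fails for a single factor (take \<open>t = 2\<close>); this is where \<open>n \<ge> 2\<close> enters: on \<open>\<int>\<close>
  the logarithmic potential below is not subharmonic.\<close>
lemma prod_shifted_squares_ge:
  fixes t :: "'i \<Rightarrow> real"
  assumes "finite I" and "2 \<le> card I" and Y: "Y = (\<Sum>i\<in>I. (t i)\<^sup>2) + 1"
  shows "Y ^ (2 * card I) \<le> (\<Prod>i\<in>I. (Y + 1)\<^sup>2 - 4 * (t i)\<^sup>2)"
proof -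
  define A where "A = (Y + 1)\<^sup>2"
  define S where "S = (\<Sum>i\<in>I. (t i)\<^sup>2)"
  have "0 \<le> S" unfolding S_def by (simp add: sum_nonneg)
  have Y_S: "Y = S + 1" using Y S_def by simp
  have "0 < A" using \<open>0 \<le> S\<close> Y_S by (simp add: A_def)
  have A_minus: "A - 4 * S = S\<^sup>2 + 4" by (simp add: A_def Y_S power2_eq_square algebra_simps)
  have "0 \<le> 4 * (t i)\<^sup>2 \<and> 4 * (t i)\<^sup>2 \<le> A" if "i \<in> I" for i
  proof -
    have "(t i)\<^sup>2 \<le> S" unfolding S_def using assms(1) that by (intro member_le_sum) auto
    then show ?thesis using A_minus zero_le_power2[of S] by (intro conjI) (simp, linarith)
  qed
  then have "A ^ card I * (1 - (\<Sum>i\<in>I. 4 * (t i)\<^sup>2) / A) \<le> (\<Prod>i\<in>I. A - 4 * (t i)\<^sup>2)"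
    by (rule Weierstrass_prod_ineq_scaled[OF \<open>0 < A\<close>])
  then have "A ^ card I * (1 - 4 * S / A) \<le> (\<Prod>i\<in>I. (Y + 1)\<^sup>2 - 4 * (t i)\<^sup>2)"
    by (simp add: S_def sum_distrib_left A_def)
  moreover obtain m where m: "card I = m + 2" using assms(2) le_Suc_ex by (metis add.commute)
  moreover have "A ^ card I * (1 - 4 * S / A) = A ^ m * (A * (A - 4 * S))"
    using \<open>0 < A\<close> unfolding m by (simp add: field_simps power2_eq_square)
  moreover have "Y ^ (2 * card I) \<le> A ^ m * (A * (A - 4 * S))"
  proof -
    have "Y ^ 4 \<le> A * (A - 4 * S)"
      using \<open>0 \<le> S\<close> unfolding A_minus by (simp add: A_def Y_S power2_eq_square power4_eq_xxxx
          algebra_simps)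
    moreover have "(Y\<^sup>2) ^ m \<le> A ^ m"
      using \<open>0 \<le> S\<close> unfolding A_def Y_S by (intro power_mono) auto
    ultimately have "(Y\<^sup>2) ^ m * Y ^ 4 \<le> A ^ m * (A * (A - 4 * S))"
      using \<open>0 < A\<close> by (intro mult_mono) simp_all
    moreover have "2 * card I = 2 * m + 4" using m by simp
    then have "Y ^ (2 * card I) = (Y\<^sup>2) ^ m * Y ^ 4" by (simp only: power_add power_mult)
    ultimately show ?thesis by simp
  qed
  ultimately show ?thesis by linarith
qed

definition sqdist :: "int ^ 'n \<Rightarrow> int ^ 'n \<Rightarrow> real" where
  "sqdist q x = (\<Sum>i\<in>UNIV. (real_of_int (x $ i - q $ i))\<^sup>2)"

definition log_potential :: "int ^ 'n \<Rightarrow> int ^ 'n \<Rightarrow> real" where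
  "log_potential q x = ln (1 + sqdist q x)"

lemma sqdist_nonneg: "0 \<le> sqdist q x"
  unfolding sqdist_def by (simp add: sum_nonneg)

lemma log_potential_nonneg: "0 \<le> log_potential q x"
  unfolding log_potential_def using sqdist_nonneg[of q x] by simp

lemma sqdist_add_axis:
  "sqdist q (x + axis i c) = sqdist q x + 2 * c * real_of_int (x $ i - q $ i) + c\<^sup>2"
proof -
  have "(\<Sum>j\<in>UNIV. (real_of_int ((x + axis i c) $ j - q $ j))\<^sup>2) =
        (\<Sum>j\<in>UNIV. (real_of_int (x $ j - q $ j))\<^sup>2
           + (if j = i then 2 * c * real_of_int (x $ i - q $ i) + c\<^sup>2 else 0))"
    by (intro sum.cong) (auto simp: axis_component power2_eq_square algebra_simps)
  then show ?thesis unfolding sqdist_def by (simp add: sum.distrib)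
qed

lemma sqdist_diff_axis:
  "sqdist q (x - axis i c) = sqdist q x - 2 * c * real_of_int (x $ i - q $ i) + c\<^sup>2"
proof -
  have minus: "x - axis i c = x + axis i (- c)" by (simp add: vec_eq_iff axis_component)
  show ?thesis unfolding minus sqdist_add_axis by simp
qed

lemma ldist_le_sqdist: "real_of_int (ldist x q) \<le> sqdist q x"
proof -
  have "\<bar>z\<bar> \<le> z\<^sup>2" for z :: int
  proof (cases "z = 0")
    case False
    then have "\<bar>z\<bar> * 1 \<le> \<bar>z\<bar> * \<bar>z\<bar>" by (intro mult_left_mono) auto
    then show ?thesis by (simp add: power2_eq_square abs_mult_self_eq)
  qed simp
  then have "real_of_int \<bar>x $ i - q $ i\<bar> \<le> (real_of_int (x $ i - q $ i))\<^sup>2" for i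
    by (metis of_int_le_iff of_int_power)
  then show ?thesis unfolding sqdist_def ldist_def by (simp add: sum_mono)
qed

lemma sqdist_le_ldist_squared: "sqdist q x \<le> (real_of_int (ldist x q))\<^sup>2"
proof -
  have "sqdist q x = (\<Sum>i\<in>UNIV. \<bar>real_of_int (x $ i - q $ i)\<bar> * \<bar>real_of_int (x $ i - q $ i)\<bar>)"
    unfolding sqdist_def by (simp add: power2_eq_square)
  also have "\<dots> \<le> (\<Sum>i\<in>UNIV. \<bar>real_of_int (x $ i - q $ i)\<bar> * (\<Sum>j\<in>UNIV. \<bar>real_of_int (x $ j - q $ j)\<bar>))"
    by (intro sum_mono mult_left_mono member_le_sum) auto
  also have "\<dots> = (real_of_int (ldist x q))\<^sup>2"
    unfolding ldist_def by (simp add: power2_eq_square sum_distrib_right)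
  finally show ?thesis .
qed

lemma lap_log_potential_center:
  fixes q :: "int ^ 'n"
  shows "lap (log_potential q) q = 2 * real CARD('n) * ln 2"
  by (simp add: lap_axis log_potential_def sqdist_add_axis sqdist_diff_axis)
    (simp add: sqdist_def)

lemma lap_log_potential_nonneg:
  fixes q x :: "int ^ 'n"
  assumes "2 \<le> CARD('n)"
  shows "0 \<le> lap (log_potential q) x"
proof -
  define t where "t i = real_of_int (x $ i - q $ i)" for i
  define Y where "Y = sqdist q x + 1"
  have Y: "Y = (\<Sum>i\<in>UNIV. (t i)\<^sup>2) + 1" unfolding Y_def sqdist_def t_def by simp
  have "1 \<le> Y" unfolding Y_def using sqdist_nonneg[of q x] by simp
  have factor: "(Y + 1)\<^sup>2 - 4 * (t i)\<^sup>2 = (Y + 1 + 2 * t i) * (Y + 1 - 2 * t i)" for i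
    by (simp add: power2_eq_square algebra_simps)
  have factors_pos: "0 < Y + 1 + 2 * t i" "0 < Y + 1 - 2 * t i" for i
  proof -
    have "(t i)\<^sup>2 \<le> Y - 1" unfolding Y by simp (rule member_le_sum, auto)
    moreover have "2 * t i \<le> (t i)\<^sup>2 + 1" "- 2 * t i \<le> (t i)\<^sup>2 + 1"
      using sum_squares_bound[of "t i" 1] sum_squares_bound[of "- t i" 1] by simp_all
    ultimately show "0 < Y + 1 + 2 * t i" "0 < Y + 1 - 2 * t i" by linarith+
  qed
  have pos: "0 < (Y + 1)\<^sup>2 - 4 * (t i)\<^sup>2" for i
    unfolding factor using factors_pos by (rule mult_pos_pos)
  have pair: "log_potential q (x + axis i 1) + log_potential q (x - axis i 1) - 2 * log_potential q x
      = ln ((Y + 1)\<^sup>2 - 4 * (t i)\<^sup>2) - ln (Y\<^sup>2)" for i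
  proof -
    have "ln ((Y + 1)\<^sup>2 - 4 * (t i)\<^sup>2) = ln (Y + 1 + 2 * t i) + ln (Y + 1 - 2 * t i)"
      unfolding factor by (rule ln_mult_pos[OF factors_pos])
    moreover have "ln (Y\<^sup>2) = 2 * ln Y" using \<open>1 \<le> Y\<close> by (simp add: ln_realpow)
    ultimately show ?thesis
      unfolding log_potential_def sqdist_add_axis sqdist_diff_axis Y_def t_def
      by (simp add: algebra_simps)
  qed
  have "lap (log_potential q) x = ln (\<Prod>i\<in>UNIV. (Y + 1)\<^sup>2 - 4 * (t i)\<^sup>2) - ln (Y ^ (2 * CARD('n)))"
    using \<open>1 \<le> Y\<close> pos
    by (simp add: lap_axis pair sum_subtractf ln_prod ln_realpow power_mult less_imp_neq[symmetric])
  moreover have "Y ^ (2 * CARD('n)) \<le> (\<Prod>i\<in>UNIV. (Y + 1)\<^sup>2 - 4 * (t i)\<^sup>2)"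
    using assms by (intro prod_shifted_squares_ge[OF _ _ Y]) simp_all
  ultimately show ?thesis using \<open>1 \<le> Y\<close> by (simp add: ln_mono)
qed

lemma lap_log_potential_ge:
  fixes q x :: "int ^ 'n"
  assumes "2 \<le> CARD('n)"
  shows "2 * real CARD('n) * ln 2 * ldelta q x \<le> lap (log_potential q) x"
  using lap_log_potential_center[of q] lap_log_potential_nonneg[OF assms, of q x]
  by (auto simp: ldelta_def)

lemma abs_ln_diff_le:
  fixes u v m :: real
  assumes "0 < m" "m \<le> u" "m \<le> v"
  shows "\<bar>ln u - ln v\<bar> \<le> \<bar>u - v\<bar> / m"
proof -
  have *: "ln a - ln b \<le> (a - b) / m" if "m \<le> b" "b \<le> a" for a b
  proof -
    have "ln a - ln b = ln (a / b)" using that assms(1) by (simp add: ln_div)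
    also have "\<dots> \<le> a / b - 1" using that assms(1) by (intro ln_le_minus_one) auto
    also have "\<dots> = (a - b) / b" using that assms(1) by (simp add: field_simps)
    also have "\<dots> \<le> (a - b) / m" using that assms(1) by (intro divide_left_mono) auto
    finally show ?thesis .
  qed
  show ?thesis
    using *[of v u] *[of u v] assms by (cases "v \<le> u") (auto simp: abs_if)
qed

lemma log_potential_step_le:
  assumes "1 \<le> R" and "R \<le> sqdist q x" and "ldist x y = 1"
  shows "\<bar>log_potential q y - log_potential q x\<bar> \<le> 6 / sqrt R"
proof -
  define S where "S = sqdist q x"
  have "1 \<le> S" using assms(1,2) by (simp add: S_def)
  obtain i where y: "y = x + axis i 1 \<or> y = x - axis i 1" using assms(3) ldist_eq_1_iff by blast
  define t where "t = real_of_int (x $ i - q $ i)"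
  have "t\<^sup>2 \<le> S" unfolding S_def sqdist_def t_def by (rule member_le_sum) auto
  then have abs_t: "\<bar>t\<bar> \<le> sqrt S" by (simp add: real_le_rsqrt)
  obtain c where c: "\<bar>c\<bar> = 1" and Sy: "sqdist q y = S + 2 * c * t + 1"
    using y
  proof (elim disjE)
    assume "y = x + axis i 1"
    then show thesis using that[of 1] by (simp add: sqdist_add_axis S_def t_def)
  next
    assume "y = x - axis i 1"
    then show thesis using that[of "- 1"] by (simp add: sqdist_diff_axis S_def t_def)
  qed
  have "0 \<le> (\<bar>t\<bar> - 2)\<^sup>2" by simp
  moreover have "(\<bar>t\<bar> - 2)\<^sup>2 = t\<^sup>2 - 4 * \<bar>t\<bar> + 4"
    by (simp add: power2_eq_square algebra_simps abs_mult_self_eq)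
  moreover have "- 2 * \<bar>t\<bar> \<le> 2 * c * t"
    using abs_ge_minus_self[of "2 * c * t"] c by (simp add: abs_mult)
  ultimately have low: "S / 2 \<le> S + 2 * c * t + 2"
    using \<open>t\<^sup>2 \<le> S\<close> by linarith
  have "\<bar>2 * c * t + 1\<bar> \<le> 2 * \<bar>t\<bar> + 1"
    using abs_triangle_ineq[of "2 * c * t" 1] c by (simp add: abs_mult)
  moreover have "1 \<le> sqrt S" using \<open>1 \<le> S\<close> by simp
  ultimately have step: "\<bar>2 * c * t + 1\<bar> \<le> 3 * sqrt S" using abs_t by linarith
  have "\<bar>log_potential q y - log_potential q x\<bar> = \<bar>ln (S + 2 * c * t + 2) - ln (S + 1)\<bar>"
    by (simp add: log_potential_def Sy S_def algebra_simps)
  also have "\<dots> \<le> \<bar>2 * c * t + 1\<bar> / (S / 2)"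
    using abs_ln_diff_le[of "S / 2" "S + 2 * c * t + 2" "S + 1"] low \<open>1 \<le> S\<close> by simp
  also have "\<dots> \<le> 3 * sqrt S / (S / 2)"
    using step \<open>1 \<le> S\<close> by (intro divide_right_mono) auto
  also have "\<dots> = 6 / sqrt S"
  proof -
    have half: "S / 2 = (sqrt S)\<^sup>2 / 2" and "0 < sqrt S" using \<open>1 \<le> S\<close> by simp_all
    then show ?thesis unfolding half by (simp add: field_simps power2_eq_square)
  qed
  also have "\<dots> \<le> 6 / sqrt R" using assms(1,2) by (intro divide_left_mono) (auto simp: S_def)
  finally show ?thesis .
qed

definition vortex_potential :: "nat \<Rightarrow> (nat \<Rightarrow> int ^ 'n) \<Rightarrow> (nat \<Rightarrow> nat) \<Rightarrow> int ^ 'n \<Rightarrow> real" where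
  "vortex_potential M p nn y = (\<Sum>j\<in>{1..M}. real (nn j) * log_potential (p j) y)"

lemma vortex_potential_nonneg: "0 \<le> vortex_potential M p nn y"
  unfolding vortex_potential_def by (intro sum_nonneg mult_nonneg_nonneg log_potential_nonneg) auto

lemma vortex_source_le_lap_vortex_potential:
  fixes x :: "int ^ 'n"
  assumes "2 \<le> CARD('n)"
  shows "vortex_source M p nn x \<le> 2 * pi / (real CARD('n) * ln 2) * lap (vortex_potential M p nn) x"
proof -
  let ?c = "2 * real CARD('n) * ln 2"
  have "?c * (\<Sum>j\<in>{1..M}. real (nn j) * ldelta (p j) x) \<le> lap (vortex_potential M p nn) x"
    unfolding vortex_potential_def lap_sum lap_affine[where d = 0, simplified]
    using lap_log_potential_ge[OF assms] by (simp add: sum_distrib_left mult_left_mono sum_mono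
        mult.left_commute)
  moreover have "0 < ?c" by simp
  ultimately show ?thesis
    unfolding vortex_source_def by (simp add: field_simps)
qed

lemma vortex_potential_bounded_near:
  fixes p :: "nat \<Rightarrow> int ^ 'n"
  obtains B where "\<And>j y. j \<in> {1..M} \<Longrightarrow> ldist y (p j) \<le> r \<Longrightarrow> vortex_potential M p nn y \<le> B"
proof
  define P where "P = (\<Sum>j\<in>{1..M}. lnorm (p j))"
  have P: "lnorm (p j) \<le> P" if "j \<in> {1..M}" for j
    unfolding P_def using that by (intro member_le_sum lnorm_nonneg) auto
  define D where "D = r + 2 * P"
  fix j y assume j: "j \<in> {1..M}" and near: "ldist y (p j) \<le> r"
  have "log_potential (p k) y \<le> ln (1 + (real_of_int D)\<^sup>2)" if k: "k \<in> {1..M}" for k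
  proof -
    have "ldist y (p k) \<le> ldist y (p j) + ldist (p j) 0 + ldist 0 (p k)"
      using ldist_triangle[of y "p k" "p j"] ldist_triangle[of "p j" "p k" 0] by linarith
    then have "ldist y (p k) \<le> D"
      using near P[OF j] P[OF k] ldist_sym[of 0 "p k"] unfolding D_def lnorm_def by linarith
    moreover have "0 \<le> ldist y (p k)" unfolding ldist_def by (simp add: sum_nonneg)
    ultimately have "(real_of_int (ldist y (p k)))\<^sup>2 \<le> (real_of_int D)\<^sup>2"
      by (intro power_mono) simp_all
    then have "sqdist (p k) y \<le> (real_of_int D)\<^sup>2"
      using sqdist_le_ldist_squared[of "p k" y] by linarith
    then show ?thesis unfolding log_potential_def using sqdist_nonneg[of "p k" y] by simp
  qed
  then show "vortex_potential M p nn y \<le> (\<Sum>j\<in>{1..M}. real (nn j)) * ln (1 + (real_of_int D)\<^sup>2)"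
    unfolding vortex_potential_def sum_distrib_right by (intro sum_mono mult_left_mono) auto
qed

lemma vortex_potential_flat_far:
  fixes p :: "nat \<Rightarrow> int ^ 'n"
  assumes "0 < g"
  obtains r where "1 \<le> r" and "\<And>x y. (\<And>j. j \<in> {1..M} \<Longrightarrow> r \<le> ldist x (p j)) \<Longrightarrow> ldist x y = 1
    \<Longrightarrow> \<bar>vortex_potential M p nn y - vortex_potential M p nn x\<bar> \<le> g"
proof
  define N where "N = (\<Sum>j\<in>{1..M}. real (nn j))"
  define R where "R = (6 * N / g)\<^sup>2 + 1"
  have "1 \<le> R" by (simp add: R_def)
  have "N * (6 / sqrt R) \<le> g"
  proof -
    have "6 * N / g \<le> sqrt R" unfolding R_def by (rule real_le_rsqrt) simp
    then show ?thesis using assms \<open>1 \<le> R\<close> by (simp add: field_simps)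
  qed
  show "1 \<le> \<lceil>R\<rceil>" using \<open>1 \<le> R\<close> by simp
  fix x y assume far: "\<And>j. j \<in> {1..M} \<Longrightarrow> \<lceil>R\<rceil> \<le> ldist x (p j)" and "ldist x y = 1"
  have step: "\<bar>log_potential (p j) y - log_potential (p j) x\<bar> \<le> 6 / sqrt R"
    if "j \<in> {1..M}" for j
  proof (rule log_potential_step_le[OF \<open>1 \<le> R\<close> _ \<open>ldist x y = 1\<close>])
    show "R \<le> sqdist (p j) x"
      using far[OF that] ldist_le_sqdist[of x "p j"] by linarith
  qed
  have "\<bar>real (nn j) * (log_potential (p j) y - log_potential (p j) x)\<bar>
      \<le> real (nn j) * (6 / sqrt R)" if "j \<in> {1..M}" for j
    using mult_left_mono[OF step[OF that], of "real (nn j)"] by (simp add: abs_mult)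
  then have "\<bar>vortex_potential M p nn y - vortex_potential M p nn x\<bar> \<le> N * (6 / sqrt R)"
    unfolding vortex_potential_def N_def sum_distrib_right sum_subtractf[symmetric]
      right_diff_distrib[symmetric]
    by (intro order_trans[OF sum_abs] sum_mono)
  then show "\<bar>vortex_potential M p nn y - vortex_potential M p nn x\<bar> \<le> g"
    using \<open>N * (6 / sqrt R) \<le> g\<close> by linarith
qed

section \<open>A subsolution vanishing at infinity\<close>

lemma lap_ge_of_increments_le:
  fixes x :: "int ^ 'n"
  assumes "\<And>y. ldist x y = 1 \<Longrightarrow> \<bar>u y - u x\<bar> \<le> g"
  shows "- (2 * real CARD('n) * g) \<le> lap u x"
proof -
  have "ldist x (x + axis i 1) = 1" "ldist x (x - axis i 1) = 1" for i
    using ldist_eq_1_iff by blast+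
  then have plus: "\<bar>u (x + axis i 1) - u x\<bar> \<le> g" and minus: "\<bar>u (x - axis i 1) - u x\<bar> \<le> g" for i
    using assms by blast+
  have "- 2 * g \<le> u (x + axis i 1) + u (x - axis i 1) - 2 * u x" for i
    using plus[of i] minus[of i] unfolding abs_le_iff by linarith
  then have "(\<Sum>i\<in>(UNIV :: 'n set). - 2 * g) \<le> lap u x"
    unfolding lap_axis by (intro sum_mono)
  then show ?thesis by simp
qed

text \<open>Truncating at \<open>-1\<close>: where the truncation is active near \<open>x\<close> the Laplacian of \<open>\<Psi>\<close> dominates
  the source; elsewhere the nonlinearity, at least \<open>\<lambda> exp (-4)\<close> in size, beats the small increments.\<close>
lemma min_cs_subsolution:
  fixes \<Psi> :: "int ^ 'n \<Rightarrow> real"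
  assumes "0 \<le> lam" and "0 < g" and "g \<le> 1" and g_small: "2 * real CARD('n) * g \<le> lam * exp (- 4)"
    and lap: "\<And>x. s x \<le> lap \<Psi> x"
    and near_or_flat: "\<And>x. (\<forall>y. ldist x y \<le> 1 \<longrightarrow> \<Psi> y \<le> - 1)
      \<or> (s x = 0 \<and> (\<forall>y. ldist x y = 1 \<longrightarrow> \<bar>\<Psi> y - \<Psi> x\<bar> \<le> g))"
  shows "cs_subsolution lam s (\<lambda>x. min (\<Psi> x) (- 1))"
  unfolding cs_subsolution_def
proof (intro conjI allI)
  fix x
  let ?\<psi> = "\<lambda>x. min (\<Psi> x) (- 1)"
  show "?\<psi> x \<le> 0" by simp
  show "cs_nonlin lam (?\<psi> x) + s x \<le> lap ?\<psi> x"
  proof (cases "\<forall>y. ldist x y \<le> 1 \<longrightarrow> \<Psi> y \<le> - 1")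
    case True
    moreover have "ldist x x = 0" by (simp add: ldist_eq_0_iff)
    ultimately have "lap ?\<psi> x = lap \<Psi> x" unfolding lap_def by (intro sum.cong) auto
    moreover have "cs_nonlin lam (?\<psi> x) \<le> 0" using assms(1) by (intro cs_nonlin_nonpos) auto
    ultimately show ?thesis using lap[of x] by simp
  next
    case False
    then obtain y where y: "ldist x y \<le> 1" "- 1 < \<Psi> y" by force
    from False near_or_flat[of x] have "s x = 0" and flat: "\<And>y. ldist x y = 1 \<Longrightarrow> \<bar>\<Psi> y - \<Psi> x\<bar> \<le> g"
      by auto
    have "y = x \<or> ldist x y = 1" using y(1) ldist_nonneg[of x y] ldist_eq_0_iff[of x y] by fastforce
    then have "- 1 - g \<le> \<Psi> x" using flat[of y] y(2) \<open>0 < g\<close> by auto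
    then have "- 2 \<le> ?\<psi> x" using \<open>g \<le> 1\<close> by simp
    have "\<bar>?\<psi> y - ?\<psi> x\<bar> \<le> g" if "ldist x y = 1" for y
      using flat[OF that] by (auto simp: min_def)
    then have "- (2 * real CARD('n) * g) \<le> lap ?\<psi> x" by (rule lap_ge_of_increments_le)
    then have "- (lam * exp (- 4)) \<le> lap ?\<psi> x" using g_small by linarith
    moreover have "cs_nonlin lam (?\<psi> x) \<le> - (lam * exp (- 4))"
    proof -
      have "cs_nonlin lam (?\<psi> x) \<le> lam * ?\<psi> x * exp (2 * ?\<psi> x)"
        using assms(1) by (intro cs_nonlin_le_linear) auto
      also have "\<dots> \<le> lam * (- 1) * exp (2 * ?\<psi> x)"
        using assms(1) by (intro mult_right_mono mult_left_mono) auto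
      also have "\<dots> \<le> - (lam * exp (- 4))"
        using \<open>- 2 \<le> ?\<psi> x\<close> assms(1) by (simp add: mult_left_mono)
      finally show ?thesis .
    qed
    ultimately show ?thesis using \<open>s x = 0\<close> by simp
  qed
qed

lemma vortex_potential_near_or_flat:
  fixes p :: "nat \<Rightarrow> int ^ 'n"
  assumes "0 < g"
  obtains B where "\<And>x. (\<forall>y. ldist x y \<le> 1 \<longrightarrow> vortex_potential M p nn y \<le> B)
    \<or> ((\<forall>j\<in>{1..M}. x \<noteq> p j)
        \<and> (\<forall>y. ldist x y = 1 \<longrightarrow> \<bar>vortex_potential M p nn y - vortex_potential M p nn x\<bar> \<le> g))"
proof -
  obtain r where "1 \<le> r" and flat: "\<And>x y. (\<And>j. j \<in> {1..M} \<Longrightarrow> r \<le> ldist x (p j)) \<Longrightarrow>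
      ldist x y = 1 \<Longrightarrow> \<bar>vortex_potential M p nn y - vortex_potential M p nn x\<bar> \<le> g"
    using vortex_potential_flat_far[OF assms] by blast
  obtain B where bounded: "\<And>j y. j \<in> {1..M} \<Longrightarrow> ldist y (p j) \<le> r \<Longrightarrow> vortex_potential M p nn y \<le> B"
    using vortex_potential_bounded_near by blast
  have "(\<forall>y. ldist x y \<le> 1 \<longrightarrow> vortex_potential M p nn y \<le> B)
    \<or> ((\<forall>j\<in>{1..M}. x \<noteq> p j)
        \<and> (\<forall>y. ldist x y = 1 \<longrightarrow> \<bar>vortex_potential M p nn y - vortex_potential M p nn x\<bar> \<le> g))"
    for x
  proof (cases "\<exists>j\<in>{1..M}. ldist x (p j) < r")
    case True
    then obtain j where j: "j \<in> {1..M}" "ldist x (p j) < r" by blast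
    have "ldist y (p j) \<le> r" if "ldist x y \<le> 1" for y
      using ldist_triangle[of y "p j" x] ldist_sym[of x y] that j(2) by linarith
    then show ?thesis using bounded[OF j(1)] by blast
  next
    case False
    then have far: "r \<le> ldist x (p j)" if "j \<in> {1..M}" for j using that by force
    then have "x \<noteq> p j" if "j \<in> {1..M}" for j using that \<open>1 \<le> r\<close> ldist_eq_0_iff[of x] by force
    then show ?thesis using flat[OF far] by blast
  qed
  then show thesis by (rule that)
qed

lemma vortex_truncated_subsolution:
  fixes p :: "nat \<Rightarrow> int ^ 'n"
  assumes "2 \<le> CARD('n)" and "0 < lam"
  obtains C where "1 \<le> C" and "cs_subsolution lam (vortex_source M p nn)
    (\<lambda>x. min (2 * pi / (real CARD('n) * ln 2) * vortex_potential M p nn x - C) (- 1))"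
proof -
  define \<kappa> where "\<kappa> = 2 * pi / (real CARD('n) * ln 2)"
  have "0 < \<kappa>" by (simp add: \<kappa>_def)
  define g where "g = min 1 (lam * exp (- 4) / (2 * real CARD('n)))"
  have "0 < g" "g \<le> 1" "2 * real CARD('n) * g \<le> lam * exp (- 4)"
    using assms(2) by (auto simp: g_def field_simps min_def)
  obtain B where near_or_flat: "\<And>x. (\<forall>y. ldist x y \<le> 1 \<longrightarrow> vortex_potential M p nn y \<le> B)
    \<or> ((\<forall>j\<in>{1..M}. x \<noteq> p j) \<and>
        (\<forall>y. ldist x y = 1 \<longrightarrow> \<bar>vortex_potential M p nn y - vortex_potential M p nn x\<bar> \<le> g / \<kappa>))"
    using vortex_potential_near_or_flat[OF divide_pos_pos[OF \<open>0 < g\<close> \<open>0 < \<kappa>\<close>], of M p nn] by blast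
  define C where "C = \<bar>\<kappa> * B\<bar> + 1"
  define \<Psi> where "\<Psi> x = \<kappa> * vortex_potential M p nn x - C" for x
  have "cs_subsolution lam (vortex_source M p nn) (\<lambda>x. min (\<Psi> x) (- 1))"
  proof (rule min_cs_subsolution[OF _ \<open>0 < g\<close> \<open>g \<le> 1\<close> \<open>2 * real CARD('n) * g \<le> _\<close>])
    show "0 \<le> lam" using assms(2) by simp
    have "\<Psi> = (\<lambda>y. \<kappa> * vortex_potential M p nn y + - C)" by (simp add: \<Psi>_def fun_eq_iff)
    then have "lap \<Psi> x = \<kappa> * lap (vortex_potential M p nn) x" for x by (simp only: lap_affine)
    then show "vortex_source M p nn x \<le> lap \<Psi> x" for x
      using vortex_source_le_lap_vortex_potential[OF assms(1)] by (simp add: \<kappa>_def)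
    have "\<Psi> y \<le> - 1" if "vortex_potential M p nn y \<le> B" for y
    proof -
      have "\<kappa> * vortex_potential M p nn y \<le> \<kappa> * B" using that \<open>0 < \<kappa>\<close> by simp
      then show ?thesis unfolding \<Psi>_def C_def using abs_ge_self[of "\<kappa> * B"] by linarith
    qed
    moreover have "\<bar>\<Psi> y - \<Psi> x\<bar> \<le> g"
      if "\<bar>vortex_potential M p nn y - vortex_potential M p nn x\<bar> \<le> g / \<kappa>" for x y
      using mult_left_mono[OF that, of \<kappa>] \<open>0 < \<kappa>\<close>
      by (simp add: \<Psi>_def abs_mult flip: right_diff_distrib)
    ultimately show "(\<forall>y. ldist x y \<le> 1 \<longrightarrow> \<Psi> y \<le> - 1) \<or>
      (vortex_source M p nn x = 0 \<and> (\<forall>y. ldist x y = 1 \<longrightarrow> \<bar>\<Psi> y - \<Psi> x\<bar> \<le> g))" for x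
      using near_or_flat[of x] vortex_source_eq_0[of M x p nn] by blast
  qed
  then show thesis using that[of C] by (simp add: \<Psi>_def C_def \<kappa>_def)
qed

text \<open>The truncated potential handles the vortices but does not decay; the exponential barrier,
  started beyond all vortices at height \<open>-C\<close>, decays and lies below it at every vortex.\<close>
lemma vanishing_cs_subsolution_exists:
  fixes p :: "nat \<Rightarrow> int ^ 'n"
  assumes "2 \<le> CARD('n)" and "0 < lam"
  obtains w where "cs_subsolution lam (vortex_source M p nn) w" and "vanish_at_infinity w"
proof -
  obtain C where "1 \<le> C" and trunc: "cs_subsolution lam (vortex_source M p nn)
      (\<lambda>x. min (2 * pi / (real CARD('n) * ln 2) * vortex_potential M p nn x - C) (- 1))"
    using vortex_truncated_subsolution[OF assms] by blast
  let ?\<psi> = "\<lambda>x. min (2 * pi / (real CARD('n) * ln 2) * vortex_potential M p nn x - C) (- 1)"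
  have "- C \<le> ?\<psi> x" for x
    using vortex_potential_nonneg[of M p nn x] \<open>1 \<le> C\<close> by simp
  have "0 \<le> C" using \<open>1 \<le> C\<close> by simp
  define P where "P = (\<Sum>j\<in>{1..M}. lnorm (p j))"
  have P: "lnorm (p j) \<le> P" if "j \<in> {1..M}" for j
    unfolding P_def using that by (intro member_le_sum lnorm_nonneg) auto
  define t where "t = min 1 (lam * exp (- 2 * C) / real CARD('n))"
  have "0 < t" "t \<le> 1" "real CARD('n) * t \<le> lam * exp (- 2 * C)"
    using assms(2) by (simp_all add: t_def field_simps min_def)
  let ?\<phi> = "exp_barrier C t P :: int ^ 'n \<Rightarrow> real"
  have "cs_subsolution lam (vortex_source M p nn) (\<lambda>x. max (?\<psi> x) (?\<phi> x))"
  proof (rule cs_subsolution_max[OF trunc])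
    show "?\<phi> x \<le> 0" for x using \<open>0 \<le> C\<close> \<open>0 < t\<close> by (rule exp_barrier_nonpos)
    fix x assume less: "?\<psi> x < ?\<phi> x"
    have "vortex_source M p nn x = 0"
    proof (rule vortex_source_eq_0)
      show "x \<noteq> p j" if "j \<in> {1..M}" for j
        using less \<open>- C \<le> ?\<psi> x\<close> exp_barrier_inner[OF P[OF that], of C t] by auto
    qed
    moreover have "cs_nonlin lam (?\<phi> x) \<le> lap ?\<phi> x"
      using assms(2) \<open>0 \<le> C\<close> \<open>0 < t\<close> \<open>t \<le> 1\<close> \<open>real CARD('n) * t \<le> _\<close>
      by (intro exp_barrier_subsolution_small_rate) auto
    ultimately show "cs_nonlin lam (?\<phi> x) + vortex_source M p nn x \<le> lap ?\<phi> x" by simp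
  qed
  moreover have "vanish_at_infinity (\<lambda>x. max (?\<psi> x) (?\<phi> x))"
    using exp_barrier_vanish_at_infinity[OF \<open>0 \<le> C\<close> \<open>0 < t\<close>, of P]
    by (rule vanish_at_infinity_dominated) (use exp_barrier_nonpos[OF \<open>0 \<le> C\<close> \<open>0 < t\<close>] in auto)
  ultimately show thesis by (rule that)
qed

section \<open>Decay and summability\<close>

text \<open>\<open>A\<close> is chosen so that the barrier lies below \<open>U\<close> on the finite set where \<open>U \<le> -1/4\<close> or the
  source is active; off that set the maximum of \<open>U\<close> and the barrier is again a subsolution, hence
  below \<open>U\<close>.\<close>
lemma maximal_cs_solution_exp_decay:
  fixes U :: "int ^ 'n \<Rightarrow> real"
  assumes "0 < lam" and "finite {x. s x \<noteq> 0}"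
    and sol: "\<And>x. lap U x = cs_nonlin lam (U x) + s x" and nonpos: "\<And>x. U x \<le> 0"
    and "vanish_at_infinity U" and maximal: "\<And>w x. cs_subsolution lam s w \<Longrightarrow> w x \<le> U x"
  obtains A where "0 \<le> A" and "\<And>x. \<bar>U x\<bar> \<le> A * (1 / (1 + lam / (2 * real CARD('n)))) ^ nat (lnorm x)"
proof -
  define t where "t = lam / (2 * real CARD('n))"
  have "0 < t" using assms(1) by (simp add: t_def)
  define a where "a = 1 / (1 + t)"
  have "0 < a" using \<open>0 < t\<close> by (simp add: a_def)
  define K where "K = {x. 1/4 \<le> \<bar>U x\<bar>} \<union> {x. s x \<noteq> 0}"
  have "finite {x. 1/4 \<le> \<bar>U x\<bar>}" by (rule vanish_at_infinity_finite_superlevel[OF assms(5)]) simp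
  then have "finite K" unfolding K_def using assms(2) by simp
  define A where "A = (\<Sum>x\<in>K. - U x / a ^ nat (lnorm x))"
  have "0 \<le> - U x / a ^ nat (lnorm x)" for x
    using nonpos[of x] \<open>0 < a\<close> by (intro divide_nonneg_pos) auto
  then have "0 \<le> A" unfolding A_def by (simp add: sum_nonneg)
  let ?v = "exp_barrier A t 0 :: int ^ 'n \<Rightarrow> real"
  have v: "?v x = - A * a ^ nat (lnorm x)" for x by (simp add: exp_barrier_def a_def)
  have "?v x \<le> U x" if "x \<in> K" for x
  proof -
    have "- U x / a ^ nat (lnorm x) \<le> A"
      unfolding A_def using \<open>finite K\<close> that \<open>\<And>x. 0 \<le> - U x / a ^ nat (lnorm x)\<close>
      by (intro member_le_sum) auto
    then show ?thesis using \<open>0 < a\<close> by (simp add: v field_simps)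
  qed
  have "cs_subsolution lam s (\<lambda>x. max (U x) (?v x))"
  proof (rule cs_subsolution_max)
    show "cs_subsolution lam s U" using sol nonpos by (simp add: cs_subsolution_def)
    show "?v x \<le> 0" for x using \<open>0 \<le> A\<close> \<open>0 < t\<close> by (rule exp_barrier_nonpos)
    fix x assume "U x < ?v x"
    then have "x \<notin> K" using \<open>\<And>x. x \<in> K \<Longrightarrow> ?v x \<le> U x\<close> by force
    then have "s x = 0" and "- 1/4 \<le> ?v x" using \<open>U x < ?v x\<close> nonpos[of x] by (auto simp: K_def)
    moreover have "cs_nonlin lam (?v x) \<le> lap ?v x"
      using exp_barrier_subsolution_near_zero[OF assms(1) \<open>0 \<le> A\<close>] \<open>- 1/4 \<le> ?v x\<close>
      unfolding t_def by blast
    ultimately show "cs_nonlin lam (?v x) + s x \<le> lap ?v x" by simp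
  qed
  then have below: "?v x \<le> U x" for x using maximal by (meson max.boundedE)
  have "\<bar>U x\<bar> \<le> A * a ^ nat (lnorm x)" for x using below[of x] nonpos[of x] v[of x] by linarith
  then show thesis using that \<open>0 \<le> A\<close> by (simp add: a_def t_def)
qed

lemma sum_power_abs_int_le:
  fixes b :: real
  assumes "0 \<le> b" and "b < 1"
  shows "(\<Sum>z\<in>{-N..N}. b ^ nat \<bar>z\<bar>) \<le> 2 / (1 - b)"
proof -
  let ?m = "nat N"
  define f where "f = (\<lambda>(s, k). if s then int k else - int k)"
  have "{-N..N} \<subseteq> f ` (UNIV \<times> {..?m})"
  proof
    fix z assume "z \<in> {-N..N}"
    then have "z = f (0 \<le> z, nat \<bar>z\<bar>)" "nat \<bar>z\<bar> \<le> ?m" by (auto simp: f_def)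
    then show "z \<in> f ` (UNIV \<times> {..?m})" by blast
  qed
  then have "(\<Sum>z\<in>{-N..N}. b ^ nat \<bar>z\<bar>) \<le> (\<Sum>z\<in>f ` (UNIV \<times> {..?m}). b ^ nat \<bar>z\<bar>)"
    using assms(1) by (intro sum_mono2) auto
  also have "\<dots> \<le> (\<Sum>(s, k)\<in>(UNIV :: bool set) \<times> {..?m}. b ^ k)"
  proof -
    have "(\<lambda>z. b ^ nat \<bar>z\<bar>) \<circ> f = (\<lambda>(s, k). b ^ k)" by (auto simp: f_def fun_eq_iff)
    then show ?thesis
      using sum_image_le[of "UNIV \<times> {..?m}" "\<lambda>z. b ^ nat \<bar>z\<bar>" f] assms(1) by simp
  qed
  also have "\<dots> = 2 * (\<Sum>k<Suc ?m. b ^ k)"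
    by (simp add: sum.cartesian_product[symmetric] UNIV_bool lessThan_Suc_atMost)
  also have "\<dots> = 2 * ((1 - b ^ Suc ?m) / (1 - b))" using assms by (simp only: sum_gp_strict) simp
  also have "\<dots> \<le> 2 * (1 / (1 - b))" using assms by (intro mult_left_mono divide_right_mono) auto
  finally show ?thesis by simp
qed

lemma nat_lnorm_eq: "nat (lnorm x) = (\<Sum>i\<in>UNIV. nat \<bar>x $ i\<bar>)"
proof -
  have "lnorm x = int (\<Sum>i\<in>UNIV. nat \<bar>x $ i\<bar>)" by (simp add: lnorm_eq)
  then show ?thesis by (metis nat_int)
qed

lemma sum_box_power_lnorm:
  fixes b :: real
  shows "(\<Sum>x\<in>{x :: int ^ 'n. \<forall>i. \<bar>x $ i\<bar> \<le> N}. b ^ nat (lnorm x)) = (\<Sum>z\<in>{-N..N}. b ^ nat \<bar>z\<bar>) ^ CARD('n)"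
proof -
  define PE where "PE = PiE (UNIV :: 'n set) (\<lambda>_. {-N..N})"
  have "{x :: int ^ 'n. \<forall>i. \<bar>x $ i\<bar> \<le> N} = vec_lambda ` PE"
  proof (intro equalityI subsetI)
    fix x :: "int ^ 'n" assume "x \<in> {x. \<forall>i. \<bar>x $ i\<bar> \<le> N}"
    then have "vec_nth x \<in> PE"
      by (auto simp: PE_def PiE_def extensional_def abs_le_iff) (metis minus_le_iff)
    then show "x \<in> vec_lambda ` PE" by (metis image_eqI vec_nth_inverse)
  next
    fix x assume "x \<in> vec_lambda ` PE"
    then obtain g where "g \<in> PE" "x = vec_lambda g" by blast
    then show "x \<in> {x. \<forall>i. \<bar>x $ i\<bar> \<le> N}"
      by (auto simp: PE_def PiE_iff abs_le_iff) (metis minus_le_iff)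
  qed
  moreover have "inj_on vec_lambda PE" by (rule inj_onI) (metis vec_lambda_inverse UNIV_I)
  ultimately have "(\<Sum>x\<in>{x :: int ^ 'n. \<forall>i. \<bar>x $ i\<bar> \<le> N}. b ^ nat (lnorm x))
      = (\<Sum>g\<in>PE. \<Prod>i\<in>UNIV. b ^ nat \<bar>g i\<bar>)"
    by (simp add: sum.reindex nat_lnorm_eq power_sum)
  also have "\<dots> = (\<Prod>i\<in>(UNIV :: 'n set). \<Sum>z\<in>{-N..N}. b ^ nat \<bar>z\<bar>)"
    unfolding PE_def by (rule prod_sum_PiE[symmetric]) auto
  finally show ?thesis by simp
qed

lemma summable_on_power_lnorm:
  fixes b :: real
  assumes "0 \<le> b" and "b < 1"
  shows "(\<lambda>x :: int ^ 'n. b ^ nat (lnorm x)) summable_on UNIV"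
proof (rule nonneg_bdd_above_summable_on)
  show "0 \<le> b ^ nat (lnorm x)" for x using assms(1) by simp
  show "bdd_above (sum (\<lambda>x :: int ^ 'n. b ^ nat (lnorm x)) ` {F. F \<subseteq> UNIV \<and> finite F})"
  proof (rule bdd_aboveI2)
    fix F :: "(int ^ 'n) set" assume "F \<in> {F. F \<subseteq> UNIV \<and> finite F}"
    then have "finite F" by simp
    define N where "N = (\<Sum>x\<in>F. lnorm x)"
    define Box where "Box = {x :: int ^ 'n. \<forall>i. \<bar>x $ i\<bar> \<le> N}"
    have "F \<subseteq> Box"
    proof
      fix x assume "x \<in> F"
      then have "lnorm x \<le> N"
        unfolding N_def using \<open>finite F\<close> by (intro member_le_sum lnorm_nonneg) auto
      then show "x \<in> Box" unfolding Box_def using abs_component_le_lnorm order_trans by blast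
    qed
    then have "(\<Sum>x\<in>F. b ^ nat (lnorm x)) \<le> (\<Sum>x\<in>Box. b ^ nat (lnorm x))"
      using assms(1) by (intro sum_mono2) (simp_all add: Box_def finite_box)
    also have "\<dots> \<le> (2 / (1 - b)) ^ CARD('n)"
      unfolding Box_def sum_box_power_lnorm using assms
      by (intro power_mono sum_power_abs_int_le) (simp_all add: sum_nonneg)
    finally show "(\<Sum>x\<in>F. b ^ nat (lnorm x)) \<le> (2 / (1 - b)) ^ CARD('n)" .
  qed
qed

lemma in_lp_of_exp_decay:
  fixes u :: "int ^ 'n \<Rightarrow> real"
  assumes "0 \<le> A" "0 < a" "a < 1" "0 < q" and decay: "\<And>x. \<bar>u x\<bar> \<le> A * a ^ nat (lnorm x)"
  shows "in_lp q u"
  unfolding in_lp_def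
proof (rule summable_on_comparison_test)
  define b where "b = a powr q"
  have "0 \<le> b" "b < 1" using assms(2-4) powr_less_mono2[of q a 1] by (simp_all add: b_def)
  then show "(\<lambda>x :: int ^ 'n. A powr q * b ^ nat (lnorm x)) summable_on UNIV"
    by (intro summable_on_cmult_right summable_on_power_lnorm)
  fix x :: "int ^ 'n" assume "x \<in> UNIV"
  have "\<bar>u x\<bar> powr q \<le> (A * a ^ nat (lnorm x)) powr q"
    using decay assms(4) by (intro powr_mono2) auto
  also have "\<dots> = A powr q * b ^ nat (lnorm x)"
    using assms(1,2) by (simp add: powr_mult b_def powr_realpow[symmetric] powr_powr mult.commute)
  finally show "\<bar>u x\<bar> powr q \<le> A powr q * b ^ nat (lnorm x)" .
qed simp

lemma in_linf_of_exp_decay: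
  fixes u :: "int ^ 'n \<Rightarrow> real"
  assumes "0 \<le> A" "0 \<le> a" "a \<le> 1" and decay: "\<And>x. \<bar>u x\<bar> \<le> A * a ^ nat (lnorm x)"
  shows "in_linf u"
  unfolding in_linf_def
proof (intro exI allI)
  fix x :: "int ^ 'n"
  have "A * a ^ nat (lnorm x) \<le> A" using assms(1-3) by (simp add: mult_left_le power_le_one)
  then show "\<bar>u x\<bar> \<le> A" using decay[of x] by linarith
qed

lemma power_lnorm_le_exp:
  assumes "0 < t" and "0 \<le> e"
  shows "(1 / (1 + t)) ^ nat (lnorm x) \<le> exp (- ln (1 + t) * (1 - e) * real_of_int (lnorm x))"
proof -
  define m where "m = ln (1 + t)"
  have "0 \<le> m" using assms(1) by (simp add: m_def)
  have "1 / (1 + t) = exp (- m)" using assms(1) by (simp add: m_def exp_minus inverse_eq_divide)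
  then have "(1 / (1 + t)) ^ nat (lnorm x) = exp (real (nat (lnorm x)) * (- m))"
    by (simp only: exp_of_nat_mult)
  also have "real (nat (lnorm x)) = real_of_int (lnorm x)" using lnorm_nonneg[of x] by simp
  also have "exp (real_of_int (lnorm x) * (- m)) \<le> exp (- m * (1 - e) * real_of_int (lnorm x))"
    using assms(2) \<open>0 \<le> m\<close> lnorm_nonneg[of x]
    by (simp add: mult_right_mono mult_left_mono algebra_simps)
  finally show ?thesis unfolding m_def .
qed

lemma maximal_vortex_solution_exp_decay:
  fixes p :: "nat \<Rightarrow> int ^ 'n"
  assumes "2 \<le> CARD('n)" and "0 < lam"
  obtains U A where "cs_solution lam M p nn U"
    and "\<And>f x. cs_solution lam M p nn f \<Longrightarrow> f x \<le> U x" and "0 \<le> A"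
    and "\<And>x. \<bar>U x\<bar> \<le> A * (1 / (1 + lam / (2 * real CARD('n)))) ^ nat (lnorm x)"
proof -
  let ?s = "vortex_source M p nn :: int ^ 'n \<Rightarrow> real"
  obtain w where w: "cs_subsolution lam ?s w" and "vanish_at_infinity w"
    using vanishing_cs_subsolution_exists[OF assms] by blast
  obtain U where eq: "\<And>x. lap U x = cs_nonlin lam (U x) + ?s x" and nonpos: "\<And>x. U x \<le> 0"
    and maximal: "\<And>w' x. cs_subsolution lam ?s w' \<Longrightarrow> w' x \<le> U x"
    using maximal_cs_solution_exists[OF _ vortex_source_nonneg w] assms(2) by auto
  have "\<bar>U x\<bar> \<le> \<bar>w x\<bar>" for x using maximal[OF w, of x] nonpos[of x] by linarith
  then have "vanish_at_infinity U"
    using \<open>vanish_at_infinity w\<close> vanish_at_infinity_dominated by blast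
  then have "cs_solution lam M p nn U" using eq by (simp add: cs_solution_iff)
  moreover have "f x \<le> U x" if "cs_solution lam M p nn f" for f x
    using maximal cs_solution_is_subsolution[OF assms(2) that] by blast
  moreover have "finite {x. ?s x \<noteq> 0}"
    by (rule finite_subset[of _ "p ` {1..M}"]) (auto intro: vortex_source_eq_0)
  then obtain A where "0 \<le> A"
    and "\<And>x. \<bar>U x\<bar> \<le> A * (1 / (1 + lam / (2 * real CARD('n)))) ^ nat (lnorm x)"
    using maximal_cs_solution_exp_decay[OF assms(2), of ?s U] eq nonpos \<open>vanish_at_infinity U\<close> maximal
    by blast
  ultimately show thesis using that by blast
qed

theorem theorem1p1:
  fixes lam :: real and M :: nat and p :: "nat \<Rightarrow> int ^ 'n" and nn :: "nat \<Rightarrow> nat"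
  assumes "CARD('n) \<ge> 2"
    and "lam > 0"
    and "inj_on p {1..M}"
    and "\<forall>j\<in>{1..M}. nn j > 0"
  shows "\<exists>u :: int ^ 'n \<Rightarrow> real.
           cs_solution lam M p nn u
         \<and> (\<forall>q::real. q \<ge> 1 \<longrightarrow> in_lp q u) \<and> in_linf u
         \<and> (\<forall>f. cs_solution lam M p nn f \<longrightarrow> (\<forall>x. f x \<le> u x))
         \<and> (\<forall>e. 0 < e \<and> e < 1 \<longrightarrow>
              (\<exists>C R. \<forall>x. real_of_int (lnorm x) \<ge> R \<longrightarrow>
                 \<bar>u x\<bar> \<le> C * exp (- ln (1 + lam / (2 * real CARD('n))) * (1 - e) * real_of_int (lnorm x))))"
proof -
  define a where "a = 1 / (1 + lam / (2 * real CARD('n)))"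
  obtain U A where sol: "cs_solution lam M p nn U"
    and maximal: "\<And>f x. cs_solution lam M p nn f \<Longrightarrow> f x \<le> U x"
    and "0 \<le> A" and decay: "\<And>x. \<bar>U x\<bar> \<le> A * a ^ nat (lnorm x)"
    using maximal_vortex_solution_exp_decay[OF assms(1,2)] unfolding a_def by blast
  have "0 < a" "a < 1" using assms(2) by (simp_all add: a_def field_simps)
  have "in_lp q U" if "1 \<le> q" for q
    using that by (intro in_lp_of_exp_decay[OF \<open>0 \<le> A\<close> \<open>0 < a\<close> \<open>a < 1\<close> _ decay]) simp
  moreover have "in_linf U"
    using \<open>0 < a\<close> \<open>a < 1\<close> by (intro in_linf_of_exp_decay[OF \<open>0 \<le> A\<close> _ _ decay]) simp_all
  moreover have "\<bar>U x\<bar> \<le> A * exp (- ln (1 + lam / (2 * real CARD('n))) * (1 - e) * lnorm x)"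
    if "0 \<le> e" for e x
  proof -
    have "a ^ nat (lnorm x) \<le> exp (- ln (1 + lam / (2 * real CARD('n))) * (1 - e) * lnorm x)"
      unfolding a_def using assms(2) that by (intro power_lnorm_le_exp) auto
    then show ?thesis using order_trans[OF decay mult_left_mono[OF _ \<open>0 \<le> A\<close>]] by blast
  qed
  ultimately show ?thesis using sol maximal by (intro exI[of _ U]) (auto intro!: exI[of _ A])
qed

end
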